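(* Let $T_l$ be a $2m$ deck-shuffler IET and $H_l$ as below. For $C\subset[0,1)$ let $J(C)$ denote the closed convex hull of $H_l(C)$ in $\mathbb{R}$. For sets $X,Y\subset\mathbb{R}$ write $X<Y$ if $x<y$ for all $x\in X$, $y\in Y$. Then: (i) if $1\le i\le m-1$ and $H_l(A_i)$ is a single point, then $J(B_i)-\tfrac12<J(A_i)$ or $J(A_i)<J(B_{i+1})-\tfrac12$; (ii) if $2\le i\le m$ and $H_l(B_i)$ is a single point, then $J(A_{i-1})+\tfrac12<J(B_i)$ or $J(B_i)<J(A_i)+\tfrac12$; (iii) if $H_l(A_m\cup B_1)$ is a single point, then $J(B_m)-\tfrac12<J(A_m\cup B_1)$ or $J(A_m\cup B_1)<J(A_1)+\tfrac12$.
   Context: A $2m$ deck-shuffler IET $T_l$ is the map $[0,1)\to[0,1)$ determined by a length vector $l$ giving a partition of $[0,1)$ into consecutive left-closed right-open intervals $A_1<\dots<A_m<B_1<\dots<B_m$ of positive lengths, with $T_l(x)=x+|B_1|+\dots+|B_i|$ for $x\in A_i$ and $T_l(x)=x-|A_i|-\dots-|A_m|$ for $x\in B_i$. $B=B_1\cup\dots\cup B_m$ and $H_l(x)=\sum_{n=0}^\infty \chi_B(T_l^n x)/2^{n+1}$. For a set $X$ and $c\in\mathbb{R}$, $X+c=\{x+c:x\in X\}$. *)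

theory Defs
  imports "HOL-Analysis.Analysis"
begin

text \<open>Length vector l: indices 1..2m; |A_i| = l i, |B_i| = l (m+i), for 1 <= i <= m.\<close>

definition dsl_valid :: "nat \<Rightarrow> (nat \<Rightarrow> real) \<Rightarrow> bool" where
  "dsl_valid m l \<longleftrightarrow> m \<ge> 1 \<and> (\<forall>j\<in>{1..2*m}. l j > 0) \<and> (\<Sum>j=1..2*m. l j) = 1"

definition dsl_int :: "(nat \<Rightarrow> real) \<Rightarrow> nat \<Rightarrow> real set" where
  "dsl_int l j = {(\<Sum>k=1..<j. l k) ..< (\<Sum>k=1..<j. l k) + l j}"

definition dsl_A :: "nat \<Rightarrow> (nat \<Rightarrow> real) \<Rightarrow> nat \<Rightarrow> real set" where
  "dsl_A m l i = dsl_int l i"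

definition dsl_B :: "nat \<Rightarrow> (nat \<Rightarrow> real) \<Rightarrow> nat \<Rightarrow> real set" where
  "dsl_B m l i = dsl_int l (m + i)"

definition dsl_Bset :: "nat \<Rightarrow> (nat \<Rightarrow> real) \<Rightarrow> real set" where
  "dsl_Bset m l = (\<Union>i\<in>{1..m}. dsl_B m l i)"

text \<open>The deck-shuffler IET; points outside [0,1) are left fixed (irrelevant).\<close>
definition dsl_T :: "nat \<Rightarrow> (nat \<Rightarrow> real) \<Rightarrow> real \<Rightarrow> real" where
  "dsl_T m l x =
     (if \<exists>i\<in>{1..m}. x \<in> dsl_A m l i
      then x + (\<Sum>k=1..(THE i. i\<in>{1..m} \<and> x \<in> dsl_A m l i). l (m + k))
      else if \<exists>i\<in>{1..m}. x \<in> dsl_B m l i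
      then x - (\<Sum>k=(THE i. i\<in>{1..m} \<and> x \<in> dsl_B m l i)..m. l k)
      else x)"

definition dsl_H :: "nat \<Rightarrow> (nat \<Rightarrow> real) \<Rightarrow> real \<Rightarrow> real" where
  "dsl_H m l x = (\<Sum>n. indicator (dsl_Bset m l) ((dsl_T m l ^^ n) x) / 2 ^ (n + 1))"

definition dsl_J :: "nat \<Rightarrow> (nat \<Rightarrow> real) \<Rightarrow> real set \<Rightarrow> real set" where
  "dsl_J m l C = closure (convex hull (dsl_H m l ` C))"

definition set_less :: "real set \<Rightarrow> real set \<Rightarrow> bool" where
  "set_less X Y \<longleftrightarrow> (\<forall>x\<in>X. \<forall>y\<in>Y. x < y)"

definition set_shift :: "real set \<Rightarrow> real \<Rightarrow> real set" where
  "set_shift X c = (\<lambda>x. x + c) ` X"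

end

theory Submission
  imports Defs
begin

text \<open>
  \<open>H\<close> is the binary expansion of the itinerary of a point with respect to \<open>B\<close>. Since \<open>T\<close> translates
  each interval, the \<open>B\<close>-intervals lie to the right of the \<open>A\<close>-intervals and \<open>A\<close>-points move right
  by at least \<open>|B\<^sub>1|\<close>, two points with the same current symbol keep their order and do not get
  closer, and every orbit visits \<open>B\<close> infinitely often. Hence \<open>H\<close> is monotone, points with equal
  codes have equal itineraries, and (by pigeonhole, as such points stay apart) they are periodic.

  If both alternatives of (i) or (ii) fail, the images \<open>T a < T b\<close> of the left endpoints of the
  relevant intervals get the same code, so the orbit of \<open>T a\<close> is periodic and returns to \<open>a\<close>.
  The failing alternatives provide points \<open>y < T a\<close> whose codes approach \<open>H (T a)\<close>; such a \<open>y\<close>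
  shadows the orbit of \<open>T a\<close> for many periods, and at every passage near \<open>a\<close> it is pushed a fixed
  length further to the left, which is impossible in \<open>[0,1)\<close>. Case (iii) is vacuous:
  \<open>H \<le> 1/2\<close> on \<open>A\<^sub>m\<close> while \<open>H > 1/2\<close> on \<open>B\<^sub>1\<close>.
\<close>

section \<open>Binary codes of itineraries\<close>

definition itinerary :: "('a \<Rightarrow> 'a) \<Rightarrow> 'a set \<Rightarrow> 'a \<Rightarrow> nat \<Rightarrow> bool" where
  "itinerary f S x n \<longleftrightarrow> (f ^^ n) x \<in> S"

definition itinerary_code :: "('a \<Rightarrow> 'a) \<Rightarrow> 'a set \<Rightarrow> 'a \<Rightarrow> real" where
  "itinerary_code f S x = (\<Sum>n. indicator S ((f ^^ n) x) / 2 ^ (n + 1))"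

lemma itinerary_0 [simp]: "itinerary f S x 0 \<longleftrightarrow> x \<in> S"
  by (simp add: itinerary_def)

lemma itinerary_Suc: "itinerary f S x (Suc n) = itinerary f S (f x) n"
  by (simp add: itinerary_def funpow_swap1)

lemma itinerary_funpow: "itinerary f S ((f ^^ k) x) n = itinerary f S x (n + k)"
  by (simp add: itinerary_def funpow_add)

lemma summable_itinerary_code: "summable (\<lambda>n. indicator S (g n) / (2::real) ^ (n + 1))"
  by (rule summable_comparison_test'[OF summable_geometric[of "1/2"]])
     (auto simp: indicator_def divide_simps)

lemma itinerary_code_unfold:
  "itinerary_code f S x = indicator S x / 2 + itinerary_code f S (f x) / 2"
proof -
  define c where "c n = indicator S ((f ^^ n) x) / (2::real) ^ (n + 1)" for n
  define c' where "c' = (\<lambda>n. indicator S ((f ^^ n) (f x)) / (2::real) ^ (n + 1))"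
  have "(\<lambda>n. c (Suc n)) = (\<lambda>n. 1/2 * c' n)"
    by (simp add: c_def c'_def funpow_swap1)
  moreover have "summable c'"
    unfolding c'_def by (rule summable_itinerary_code)
  ultimately have "(\<Sum>n. c (Suc n)) = 1/2 * suminf c'"
    by (simp only: suminf_mult)
  also have "\<dots> = itinerary_code f S (f x) / 2"
    by (simp add: c'_def itinerary_code_def)
  finally have "(\<Sum>n. c (Suc n)) = itinerary_code f S (f x) / 2" .
  moreover have "(\<Sum>n. c (Suc n)) = itinerary_code f S x - c 0"
    unfolding itinerary_code_def c_def by (rule suminf_split_head[OF summable_itinerary_code])
  ultimately show ?thesis by (simp add: c_def)
qed

lemma itinerary_code_nonneg: "0 \<le> itinerary_code f S x"
  unfolding itinerary_code_def by (rule suminf_nonneg[OF summable_itinerary_code]) simp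

lemma itinerary_code_le_1: "itinerary_code f S x \<le> 1"
proof -
  have "itinerary_code f S x \<le> (\<Sum>n. (1/2::real) ^ Suc n)"
    unfolding itinerary_code_def
    by (intro suminf_le summable_itinerary_code sums_summable[OF power_half_series])
       (simp add: indicator_def power_divide)
  also have "\<dots> = 1"
    by (rule sums_unique[OF power_half_series, symmetric])
  finally show ?thesis .
qed

lemma itinerary_code_cong:
  "itinerary f S x = itinerary f S y \<Longrightarrow> itinerary_code f S x = itinerary_code f S y"
  unfolding itinerary_code_def itinerary_def indicator_def by metis

lemma itinerary_code_ge_visit: "itinerary f S x N \<Longrightarrow> 1 / 2 ^ (N + 1) \<le> itinerary_code f S x"
proof (induction N arbitrary: x)
  case 0
  then show ?case
    using itinerary_code_unfold[of f S x] itinerary_code_nonneg[of f S "f x"] by simp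
next
  case (Suc N)
  then have "1 / 2 ^ (N + 1) \<le> itinerary_code f S (f x)"
    by (simp add: itinerary_Suc)
  then show ?case
    using itinerary_code_unfold[of f S x] by (simp add: indicator_def)
qed

lemma itinerary_code_first_difference:
  assumes "\<forall>k<j. itinerary f S x k = itinerary f S y k" "\<not> itinerary f S x j" "itinerary f S y j"
    and "j < N" "itinerary f S y N"
  shows "1 / 2 ^ (N + 1) \<le> itinerary_code f S y - itinerary_code f S x"
  using assms
proof (induction j arbitrary: x y N)
  case 0
  then obtain N' where N: "N = Suc N'" by (cases N) auto
  have "1 / 2 ^ (N' + 1) \<le> itinerary_code f S (f y)"
    using 0 N by (intro itinerary_code_ge_visit) (simp add: itinerary_Suc)
  then show ?case
    using 0 N itinerary_code_unfold[of f S x] itinerary_code_unfold[of f S y]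
      itinerary_code_le_1[of f S "f x"] by simp
next
  case (Suc j)
  then obtain N' where N: "N = Suc N'" by (cases N) auto
  have "1 / 2 ^ (N' + 1) \<le> itinerary_code f S (f y) - itinerary_code f S (f x)"
    using Suc.prems N by (intro Suc.IH) (auto simp: itinerary_Suc)
  moreover have "indicator S x = (indicator S y :: real)"
    using Suc.prems(1) by (auto simp: indicator_def)
  ultimately show ?case
    using N itinerary_code_unfold[of f S x] itinerary_code_unfold[of f S y] by simp
qed

section \<open>Expanding shuffles of the unit interval\<close>

lemma increments_unbounded:
  fixes g :: "nat \<Rightarrow> real"
  assumes "0 < t" and "\<And>j. g j + t \<le> g (Suc j)"
  shows "\<exists>j. c < g j"
proof -
  have linear: "g 0 + j * t \<le> g j" for j
  proof (induction j)
    case (Suc j)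
    then show ?case using assms(2)[of j] by (simp add: distrib_right)
  qed simp
  obtain j :: nat where "c - g 0 < j * t"
    using ex_less_of_nat_mult[OF assms(1)] by blast
  then show ?thesis using linear[of j] by (intro exI[of _ j]) linarith
qed

lemma bounded_sequence_close_pair:
  fixes x :: "nat \<Rightarrow> real"
  assumes "bounded (range x)" and "0 < \<delta>"
  shows "\<exists>n1 n2. n1 < n2 \<and> \<bar>x n1 - x n2\<bar> < \<delta>"
proof -
  obtain r L where r: "strict_mono r" and "(x \<circ> r) \<longlonglongrightarrow> L"
    using bounded_imp_convergent_subsequence[OF assms(1)] by blast
  then obtain M where "\<forall>m\<ge>M. \<forall>n\<ge>M. norm ((x \<circ> r) m - (x \<circ> r) n) < \<delta>"
    using CauchyD[OF LIMSEQ_imp_Cauchy assms(2)] by blast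
  then have "\<bar>x (r M) - x (r (Suc M))\<bar> < \<delta>" by fastforce
  moreover have "r M < r (Suc M)" using r by (simp add: strict_mono_def)
  ultimately show ?thesis by blast
qed

lemma funpow_apply_funpow: "(f ^^ m) ((f ^^ n) x) = (f ^^ (m + n)) x"
  by (simp add: funpow_add)

lemma expanding_steps_unbounded:
  fixes g :: "nat \<Rightarrow> real"
  assumes "g 0 < g 1"
    and "\<And>j. g j < g (Suc j) \<Longrightarrow> g (Suc j) - g j \<le> g (Suc (Suc j)) - g (Suc j)"
  shows "\<exists>j. c < g j"
proof (rule increments_unbounded)
  show "0 < g 1 - g 0"
    using assms(1) by simp
  show "g j + (g 1 - g 0) \<le> g (Suc j)" for j
  proof (induction j)
    case (Suc j)
    then show ?case
      using assms(1) assms(2)[of j] by linarith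
  qed simp
qed

locale expanding_shuffle =
  fixes T :: "real \<Rightarrow> real" and B :: "real set" and d :: real
  assumes maps_unit: "x \<in> {0..<1} \<Longrightarrow> T x \<in> {0..<1}"
    and inj_on_unit: "inj_on T {0..<1}"
    and expands: "\<lbrakk>0 \<le> x; x < y; y < 1; x \<in> B \<longleftrightarrow> y \<in> B\<rbrakk> \<Longrightarrow> y - x \<le> T y - T x"
    and B_upward_closed: "\<lbrakk>0 \<le> x; x < y; y < 1; x \<in> B\<rbrakk> \<Longrightarrow> y \<in> B"
    and drift_pos: "0 < d"
    and drift: "\<lbrakk>x \<in> {0..<1}; x \<notin> B\<rbrakk> \<Longrightarrow> x + d \<le> T x"
begin

abbreviation itin :: "real \<Rightarrow> nat \<Rightarrow> bool" where
  "itin \<equiv> itinerary T B"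

abbreviation code :: "real \<Rightarrow> real" where
  "code \<equiv> itinerary_code T B"

lemma funpow_maps_unit: "x \<in> {0..<1} \<Longrightarrow> (T ^^ n) x \<in> {0..<1}"
  by (induction n) (simp_all add: maps_unit del: atLeastLessThan_iff)

lemma inj_on_funpow: "inj_on (T ^^ n) {0..<1}"
proof (induction n)
  case (Suc n)
  have "inj_on (T ^^ n) (T ` {0..<1})"
    using Suc maps_unit by (meson image_subsetI inj_on_subset)
  then show ?case
    unfolding funpow_Suc_right by (rule comp_inj_on[OF inj_on_unit])
qed simp

lemma funpow_expands:
  assumes "0 \<le> x" "x < y" "y < 1" and "\<forall>k<n. itin x k = itin y k"
  shows "y - x \<le> (T ^^ n) y - (T ^^ n) x"
  using assms(4)
proof (induction n)
  case (Suc n)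
  define X Y where "X = (T ^^ n) x" and "Y = (T ^^ n) y"
  have "y - x \<le> Y - X"
    using Suc by (simp add: X_def Y_def)
  moreover have "0 \<le> X" "Y < 1"
    using funpow_maps_unit[of x n] funpow_maps_unit[of y n] assms by (auto simp: X_def Y_def)
  moreover have "X \<in> B \<longleftrightarrow> Y \<in> B"
    using Suc.prems by (simp add: X_def Y_def itinerary_def)
  ultimately have "Y - X \<le> T Y - T X"
    using assms(2) by (intro expands) auto
  with \<open>y - x \<le> Y - X\<close> have "y - x \<le> T Y - T X"
    by linarith
  then show ?case
    by (simp add: X_def Y_def)
qed simp

lemma visits_B_after: assumes "x \<in> {0..<1}" shows "\<exists>N>M. itin x N"
proof (rule ccontr)
  assume never: "\<not> (\<exists>N>M. itin x N)"
  have never_B: "(T ^^ (k + Suc M)) x \<notin> B" for k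
  proof -
    have "M < k + Suc M"
      by simp
    then show ?thesis
      using never unfolding itinerary_def by blast
  qed
  have "(T ^^ (k + Suc M)) x + d \<le> (T ^^ (Suc k + Suc M)) x" for k
    using drift[OF funpow_maps_unit[OF assms] never_B] by simp
  then obtain k where "1 < (T ^^ (k + Suc M)) x"
    using increments_unbounded[OF drift_pos, of "\<lambda>k. (T ^^ (k + Suc M)) x"] by blast
  then show False
    using funpow_maps_unit[OF assms, of "k + Suc M"] by simp
qed

lemma code_pos: assumes "x \<in> {0..<1}" shows "0 < code x"
proof -
  obtain N where "itin x N"
    using visits_B_after[OF assms] by blast
  then have "1 / 2 ^ (N + 1) \<le> code x"
    by (rule itinerary_code_ge_visit)
  moreover have "(0::real) < 1 / 2 ^ (N + 1)"
    by simp
  ultimately show ?thesis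
    by linarith
qed

lemma first_difference:
  assumes "0 \<le> x" "x < y" "y < 1" and "itin x \<noteq> itin y"
  shows "\<exists>j. (\<forall>k<j. itin x k = itin y k) \<and> \<not> itin x j \<and> itin y j"
proof -
  define j where "j = (LEAST n. itin x n \<noteq> itin y n)"
  have "\<exists>n. itin x n \<noteq> itin y n"
    using assms(4) by (simp add: fun_eq_iff)
  then have differ: "itin x j \<noteq> itin y j"
    unfolding j_def by (rule LeastI_ex)
  have agree: "\<forall>k<j. itin x k = itin y k"
    unfolding j_def using not_less_Least by blast
  have "(T ^^ j) x < (T ^^ j) y"
    using funpow_expands[OF assms(1-3) agree] assms(2) by linarith
  moreover have "0 \<le> (T ^^ j) x" "(T ^^ j) y < 1"
    using funpow_maps_unit[of x j] funpow_maps_unit[of y j] assms by auto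
  ultimately have "itin x j \<Longrightarrow> itin y j"
    unfolding itinerary_def using B_upward_closed by blast
  then show ?thesis
    using agree differ by blast
qed

lemma code_less:
  assumes "0 \<le> x" "x < y" "y < 1" and "itin x \<noteq> itin y"
  shows "code x < code y"
proof -
  obtain j where j: "\<forall>k<j. itin x k = itin y k" "\<not> itin x j" "itin y j"
    using first_difference[OF assms] by blast
  obtain N where "j < N" "itin y N"
    using visits_B_after[of y j] assms by auto
  then have "1 / 2 ^ (N + 1) \<le> code y - code x"
    using itinerary_code_first_difference[OF j] by blast
  moreover have "(0::real) < 1 / 2 ^ (N + 1)"
    by simp
  ultimately show ?thesis
    by linarith
qed

lemma code_mono:
  assumes "0 \<le> x" "x \<le> y" "y < 1"
  shows "code x \<le> code y"
proof (cases "x < y \<and> itin x \<noteq> itin y")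
  case True
  then have "code x < code y"
    using assms by (intro code_less) auto
  then show ?thesis
    by simp
next
  case False
  then have "itin x = itin y"
    using assms(2) by auto
  then have "code x = code y"
    by (rule itinerary_code_cong)
  then show ?thesis
    by simp
qed

lemma itin_eq_of_code_eq:
  assumes "0 \<le> x" "x < y" "y < 1" and "code x = code y"
  shows "itin x = itin y"
proof (rule ccontr)
  assume "itin x \<noteq> itin y"
  then have "code x < code y"
    using assms by (intro code_less)
  then show False
    using assms(4) by simp
qed

lemma itin_agree_of_code_close:
  assumes "z \<in> {0..<1}"
  shows "\<exists>e>0. \<forall>y. 0 \<le> y \<and> y < z \<and> code z - code y < e \<longrightarrow> (\<forall>k<n. itin y k = itin z k)"
proof -
  obtain N where N: "n < N" "itin z N"
    using visits_B_after[OF assms] by blast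
  have "\<forall>k<n. itin y k = itin z k" if y: "0 \<le> y" "y < z" "code z - code y < 1 / 2 ^ (N + 1)" for y
  proof (rule ccontr)
    assume "\<not> (\<forall>k<n. itin y k = itin z k)"
    then obtain k where k: "k < n" "itin y k \<noteq> itin z k"
      by blast
    then have "itin y \<noteq> itin z"
      by metis
    then obtain j where j: "\<forall>k<j. itin y k = itin z k" "\<not> itin y j" "itin z j"
      using first_difference[OF y(1,2)] assms by auto
    have "j \<le> k"
      using j(1) k(2) not_less by blast
    then have "1 / 2 ^ (N + 1) \<le> code z - code y"
      using itinerary_code_first_difference[OF j _ N(2)] N(1) k(1) by simp
    then show False
      using y by linarith
  qed
  then show ?thesis
    by (intro exI[of _ "1 / 2 ^ (N + 1)"]) simp
qed

lemma B_between: "\<lbrakk>0 \<le> x; x < v; v < y; y < 1; x \<in> B \<longleftrightarrow> y \<in> B\<rbrakk> \<Longrightarrow> v \<in> B \<longleftrightarrow> x \<in> B"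
  using B_upward_closed[of x v] B_upward_closed[of v y] by (cases "x \<in> B") auto

lemma itin_between:
  assumes "0 \<le> x" "x < v" "v < y" "y < 1" and "itin x = itin y"
  shows "itin v = itin x"
proof -
  have "\<forall>k<n. itin v k = itin x k" for n
  proof (induction n)
    case (Suc n)
    have "v - x \<le> (T ^^ n) v - (T ^^ n) x" "y - v \<le> (T ^^ n) y - (T ^^ n) v"
      using funpow_expands[of x v n] funpow_expands[of v y n] Suc assms by auto
    then have "(T ^^ n) x < (T ^^ n) v" "(T ^^ n) v < (T ^^ n) y"
      using assms(2,3) by linarith+
    moreover have "0 \<le> (T ^^ n) x" "(T ^^ n) y < 1"
      using funpow_maps_unit[of x n] funpow_maps_unit[of y n] assms by auto
    moreover have "(T ^^ n) x \<in> B \<longleftrightarrow> (T ^^ n) y \<in> B"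
      using assms(5) by (metis itinerary_def)
    ultimately have "itin v n = itin x n"
      unfolding itinerary_def by (meson B_between)
    then show ?case
      using Suc less_Suc_eq by blast
  qed simp
  then show ?thesis
    by blast
qed

lemma funpow_fixed_of_itin_shift:
  assumes v: "v \<in> {0..<1}" and shift: "itin ((T ^^ p) v) = itin v"
  shows "(T ^^ p) v = v"
proof -
  define g where "g j = (T ^^ (j * p)) v" for j
  have g_Suc: "g (Suc j) = (T ^^ p) (g j)" for j
    by (simp add: g_def funpow_add)
  have g_unit: "0 \<le> g j" "g j < 1" for j
    using funpow_maps_unit[OF v] by (auto simp: g_def)
  have itin_periodic: "itin v (n + j * p) = itin v n" for n j
  proof (induction j)
    case (Suc j)
    have "itin v (n + Suc j * p) = itin ((T ^^ p) v) (n + j * p)"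
      by (simp add: itinerary_funpow algebra_simps)
    then show ?case
      using Suc shift by simp
  qed simp
  have itin_g: "itin (g j) = itin v" for j
    by (simp add: fun_eq_iff g_def itinerary_funpow itin_periodic)
  have expand: "g k - g j \<le> g (Suc k) - g (Suc j)" if "g j < g k" for j k
    using funpow_expands[of "g j" "g k" p] that g_unit itin_g by (simp add: g_Suc)
  show ?thesis
  proof (rule ccontr)
    assume "(T ^^ p) v \<noteq> v"
    then have "g 0 \<noteq> g 1"
      by (simp add: g_def)
    then consider "g 0 < g 1" | "g 1 < g 0"
      by linarith
    then show False
    proof cases
      case 1
      have "g (Suc j) - g j \<le> g (Suc (Suc j)) - g (Suc j)" if "g j < g (Suc j)" for j
        using expand[of j "Suc j"] that by simp
      then obtain j where "1 < g j"
        using expanding_steps_unbounded[of g 1] 1 by auto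
      then show False
        using g_unit(2)[of j] by linarith
    next
      case 2
      have "g j - g (Suc j) \<le> g (Suc j) - g (Suc (Suc j))" if "g (Suc j) < g j" for j
        using expand[of "Suc j" j] that by simp
      then obtain j where "0 < - g j"
        using expanding_steps_unbounded[of "\<lambda>j. - g j" 0] 2 by auto
      then show False
        using g_unit(1)[of j] by linarith
    qed
  qed
qed

lemma periodic_of_itin_eq:
  assumes "0 \<le> z" "z < w" "w < 1" and "itin z = itin w"
  shows "\<exists>p\<ge>1. (T ^^ p) z = z"
proof -
  have unit: "(T ^^ n) z \<in> {0..<1}" "(T ^^ n) w \<in> {0..<1}" for n
    using funpow_maps_unit assms by auto
  have gap: "(T ^^ n) z + (w - z) \<le> (T ^^ n) w" for n
    using funpow_expands[of z w n] assms by simp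
  have itin_orbit: "itin ((T ^^ n) z) = itin ((T ^^ n) w)" for n
    using assms(4) by (simp add: fun_eq_iff itinerary_funpow)
  have "(T ^^ n) z \<in> {0..1}" for n
    using unit(1)[of n] by simp
  then have "bounded (range (\<lambda>n. (T ^^ n) z))"
    by (intro bounded_subset[OF bounded_closed_interval[of 0 1]]) blast
  then obtain n1 n2 where n12: "n1 < n2" "\<bar>(T ^^ n1) z - (T ^^ n2) z\<bar> < w - z"
    using bounded_sequence_close_pair[of "\<lambda>n. (T ^^ n) z" "w - z"] assms(2) by auto
  have close: "itin ((T ^^ k) z) = itin ((T ^^ j) z)"
    if "(T ^^ j) z < (T ^^ k) z" "(T ^^ k) z < (T ^^ j) z + (w - z)" for j k
    using itin_between[of "(T ^^ j) z" "(T ^^ k) z" "(T ^^ j) w"] that gap[of j] itin_orbit[of j]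
      unit[of j] by auto
  have "itin ((T ^^ n2) z) = itin ((T ^^ n1) z)"
    using close[of n1 n2] close[of n2 n1] n12(2)
    by (cases "(T ^^ n1) z" "(T ^^ n2) z" rule: linorder_cases) auto
  moreover have "(T ^^ (n2 - n1)) ((T ^^ n1) z) = (T ^^ n2) z"
    using n12(1) by (simp add: funpow_apply_funpow)
  ultimately have "(T ^^ (n2 - n1)) ((T ^^ n1) z) = (T ^^ n1) z"
    using funpow_fixed_of_itin_shift[OF unit(1)] by metis
  then have "(T ^^ n1) ((T ^^ (n2 - n1)) z) = (T ^^ n1) z"
    by (simp add: funpow_apply_funpow add.commute)
  then have "(T ^^ (n2 - n1)) z = z"
    using inj_on_funpow[of n1] unit[of "n2 - n1"] unit[of 0] by (auto dest: inj_onD)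
  then show ?thesis
    using n12(1) by (intro exI[of _ "n2 - n1"]) auto
qed

text \<open>A point shadowing the periodic orbit of \<open>z = T a\<close> from the left loses \<open>c\<close> at every
  passage through \<open>a\<close>.\<close>
lemma periodic_orbit_repels_left:
  assumes z: "z \<in> {0..<1}" and a: "T a = z" "(T ^^ q) z = a" and c: "0 \<le> c"
    and gain: "\<And>u. \<lbrakk>0 \<le> u; u < a; u \<in> B \<longleftrightarrow> a \<in> B\<rbrakk> \<Longrightarrow> a - u + c \<le> T a - T u"
  shows "\<lbrakk>0 \<le> u; u < z; \<forall>i<k * Suc q. itin u i = itin z i\<rbrakk>
    \<Longrightarrow> z - u + k * c \<le> z - (T ^^ (k * Suc q)) u"
proof (induction k arbitrary: u)
  case (Suc k)
  define U where "U = (T ^^ q) u"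
  have agree: "itin u i = itin z i" if "i < Suc k * Suc q" for i
    using Suc.prems(3) that by blast
  have "z - u \<le> a - U"
    using funpow_expands[of u z q] Suc.prems(1,2) z agree a(2) by (simp add: U_def)
  moreover have "0 \<le> U"
    using funpow_maps_unit[of u q] Suc.prems z by (simp add: U_def)
  moreover have "U \<in> B \<longleftrightarrow> a \<in> B"
    using agree[of q] a(2) by (simp add: U_def itinerary_def)
  ultimately have "a - U + c \<le> T a - T U"
    using Suc.prems(2) by (intro gain) auto
  then have one_period: "z - u + c \<le> z - (T ^^ Suc q) u"
    using \<open>z - u \<le> a - U\<close> a(1) by (simp add: U_def)
  have z_periodic: "(T ^^ Suc q) z = z"
    using a by simp
  have "z - (T ^^ Suc q) u + k * c \<le> z - (T ^^ (k * Suc q)) ((T ^^ Suc q) u)"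
  proof (rule Suc.IH)
    show "0 \<le> (T ^^ Suc q) u"
      using funpow_maps_unit[of u "Suc q"] Suc.prems z by simp
    show "(T ^^ Suc q) u < z"
      using one_period Suc.prems(2) c by linarith
    show "\<forall>i<k * Suc q. itin ((T ^^ Suc q) u) i = itin z i"
    proof (intro allI impI)
      fix i assume "i < k * Suc q"
      then have "itin u (i + Suc q) = itin z (i + Suc q)"
        by (intro agree) simp
      then show "itin ((T ^^ Suc q) u) i = itin z i"
        by (metis itinerary_funpow z_periodic)
    qed
  qed
  moreover have "(T ^^ (k * Suc q)) ((T ^^ Suc q) u) = (T ^^ (Suc k * Suc q)) u"
    by (simp only: funpow_apply_funpow mult_Suc add.commute)
  ultimately show ?case
    using one_period by (simp add: algebra_simps)
qed simp

lemma code_collision_not_left_approximable: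
  assumes a: "a \<in> {0..<1}" and w: "T a < w" "w < 1" "code w \<le> code (T a)"
    and c: "0 < c"
    and gain: "\<And>u. \<lbrakk>0 \<le> u; u < a; u \<in> B \<longleftrightarrow> a \<in> B\<rbrakk> \<Longrightarrow> a - u + c \<le> T a - T u"
    and approx: "\<And>e. 0 < e \<Longrightarrow> \<exists>y. 0 \<le> y \<and> y < T a \<and> code (T a) - code y < e"
  shows False
proof -
  define z where "z = T a"
  have z: "z \<in> {0..<1}"
    using maps_unit[OF a] by (simp add: z_def)
  have "code z \<le> code w"
    using code_mono[of z w] z w by (simp add: z_def)
  then have "itin z = itin w"
    using itin_eq_of_code_eq[of z w] z w by (simp add: z_def)
  then obtain p where "1 \<le> p" "(T ^^ p) z = z"
    using periodic_of_itin_eq[of z w] z w by (auto simp: z_def)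
  then obtain q where q: "(T ^^ Suc q) z = z"
    by (cases p) auto
  have "T ((T ^^ q) z) = T a"
    using q by (simp add: z_def)
  then have a_orbit: "(T ^^ q) z = a"
    using inj_on_unit funpow_maps_unit[OF z, of q] a by (auto dest: inj_onD)
  obtain k :: nat where k: "1 < k * c"
    using ex_less_of_nat_mult[OF c] by blast
  obtain e where "0 < e"
    and e: "\<forall>y. 0 \<le> y \<and> y < z \<and> code z - code y < e \<longrightarrow> (\<forall>i<k * Suc q. itin y i = itin z i)"
    using itin_agree_of_code_close[OF z, of "k * Suc q"] by blast
  obtain y where y: "0 \<le> y" "y < z" "code z - code y < e"
    using approx[OF \<open>0 < e\<close>] unfolding z_def by blast
  have "z - y + k * c \<le> z - (T ^^ (k * Suc q)) y"
    using periodic_orbit_repels_left[OF z z_def[symmetric] a_orbit less_imp_le[OF c] gain] y e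
    by blast
  moreover have "0 \<le> (T ^^ (k * Suc q)) y"
    using funpow_maps_unit[of y "k * Suc q"] y z by simp
  ultimately show False
    using k y(2) z by simp
qed

end

section \<open>Deck-shuffler interval exchanges\<close>

definition dsl_alpha :: "(nat \<Rightarrow> real) \<Rightarrow> nat \<Rightarrow> real" where
  "dsl_alpha l i = (\<Sum>k=1..<i. l k)"

definition dsl_beta :: "nat \<Rightarrow> (nat \<Rightarrow> real) \<Rightarrow> nat \<Rightarrow> real" where
  "dsl_beta m l j = (\<Sum>k=1..<j. l (m + k))"

lemma dsl_alpha_1 [simp]: "dsl_alpha l 1 = 0" "dsl_alpha l (Suc 0) = 0"
  by (simp_all add: dsl_alpha_def)

lemma dsl_beta_1 [simp]: "dsl_beta m l 1 = 0" "dsl_beta m l (Suc 0) = 0"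
  by (simp_all add: dsl_beta_def)

lemma dsl_alpha_Suc: "1 \<le> i \<Longrightarrow> dsl_alpha l (Suc i) = dsl_alpha l i + l i"
  by (simp add: dsl_alpha_def sum.atLeastLessThan_Suc)

lemma dsl_beta_Suc: "1 \<le> j \<Longrightarrow> dsl_beta m l (Suc j) = dsl_beta m l j + l (m + j)"
  by (simp add: dsl_beta_def sum.atLeastLessThan_Suc)

lemma dsl_alpha_add: "1 \<le> j \<Longrightarrow> dsl_alpha l (m + j) = dsl_alpha l (m + 1) + dsl_beta m l j"
proof (induction j rule: nat_induct_at_least)
  case (Suc j)
  then show ?case
    using dsl_alpha_Suc[of "m + j" l] dsl_beta_Suc[of j m l] by simp
qed simp

lemma dsl_A_eq: "1 \<le> i \<Longrightarrow> dsl_A m l i = {dsl_alpha l i ..< dsl_alpha l (Suc i)}"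
  by (simp add: dsl_A_def dsl_int_def dsl_alpha_Suc) (simp add: dsl_alpha_def)

lemma dsl_B_eq:
  "1 \<le> j \<Longrightarrow>
    dsl_B m l j = {dsl_alpha l (m + 1) + dsl_beta m l j ..< dsl_alpha l (m + 1) + dsl_beta m l (Suc j)}"
proof -
  assume j: "1 \<le> j"
  have "dsl_B m l j = {dsl_alpha l (m + j) ..< dsl_alpha l (m + j) + l (m + j)}"
    by (simp add: dsl_B_def dsl_int_def dsl_alpha_def)
  then show ?thesis
    using dsl_alpha_add[OF j, of l m] dsl_beta_Suc[OF j, of m l] by (simp add: add.assoc)
qed

lemma dsl_B_subset_Bset: "j \<in> {1..m} \<Longrightarrow> dsl_B m l j \<subseteq> dsl_Bset m l"
  by (auto simp: dsl_Bset_def)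

lemma dsl_H_eq_itinerary_code: "dsl_H m l = itinerary_code (dsl_T m l) (dsl_Bset m l)"
  by (simp add: fun_eq_iff dsl_H_def itinerary_code_def)

lemma consecutive_intervals_cover:
  fixes f :: "nat \<Rightarrow> real"
  shows "\<lbrakk>f 1 \<le> x; x < f (Suc n)\<rbrakk> \<Longrightarrow> \<exists>i\<in>{1..n}. f i \<le> x \<and> x < f (Suc i)"
proof (induction n)
  case (Suc n)
  then show ?case
    by (cases "x < f (Suc n)") (auto intro: bexI[of _ "Suc n"])
qed simp

lemma not_set_less_shift_hull_approx:
  fixes f :: "'a \<Rightarrow> real"
  assumes "\<not> set_less (set_shift (closure (convex hull (f ` C))) c) {p}" and "0 < e"
  shows "\<exists>y\<in>C. p - c - e < f y"
proof (rule ccontr)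
  assume "\<not> (\<exists>y\<in>C. p - c - e < f y)"
  then have "closure (convex hull (f ` C)) \<subseteq> {..p - c - e}"
    by (intro closure_minimal[OF hull_minimal]) (auto simp: not_less)
  then show False
    using assms by (force simp: set_less_def set_shift_def)
qed

lemma not_set_less_hull_shift_lower:
  fixes f :: "'a \<Rightarrow> real"
  assumes "\<not> set_less {p} (set_shift (closure (convex hull (f ` C))) c)"
    and "\<And>y. y \<in> C \<Longrightarrow> r \<le> f y"
  shows "r + c \<le> p"
proof -
  have "closure (convex hull (f ` C)) \<subseteq> {r..}"
    by (intro closure_minimal[OF hull_minimal]) (auto simp: assms(2))
  then show ?thesis
    using assms(1) by (force simp: set_less_def set_shift_def)
qed

locale deck_shuffler =
  fixes m :: nat and l :: "nat \<Rightarrow> real"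
  assumes valid: "dsl_valid m l"
begin

abbreviation \<alpha> :: "nat \<Rightarrow> real" where
  "\<alpha> \<equiv> dsl_alpha l"

abbreviation \<beta> :: "nat \<Rightarrow> real" where
  "\<beta> \<equiv> dsl_beta m l"

lemma m_pos: "1 \<le> m"
  using valid by (simp add: dsl_valid_def)

lemma length_pos: "\<lbrakk>1 \<le> k; k \<le> 2 * m\<rbrakk> \<Longrightarrow> 0 < l k"
  using valid by (simp add: dsl_valid_def)

lemma alpha_mono: "\<lbrakk>i \<le> i'; i' \<le> 2 * m + 1\<rbrakk> \<Longrightarrow> \<alpha> i \<le> \<alpha> i'"
  unfolding dsl_alpha_def by (rule sum_mono2) (auto intro!: less_imp_le[OF length_pos])

lemma beta_mono: "\<lbrakk>j \<le> j'; j' \<le> m + 1\<rbrakk> \<Longrightarrow> \<beta> j \<le> \<beta> j'"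
  unfolding dsl_beta_def by (rule sum_mono2) (auto intro!: less_imp_le[OF length_pos])

lemma alpha_nonneg: "i \<le> 2 * m + 1 \<Longrightarrow> 0 \<le> \<alpha> i"
  unfolding dsl_alpha_def by (rule sum_nonneg) (auto intro!: less_imp_le[OF length_pos])

lemma beta_nonneg: "j \<le> m + 1 \<Longrightarrow> 0 \<le> \<beta> j"
  unfolding dsl_beta_def by (rule sum_nonneg) (auto intro!: less_imp_le[OF length_pos])

lemma alpha_less_Suc: "\<lbrakk>1 \<le> i; i \<le> 2 * m\<rbrakk> \<Longrightarrow> \<alpha> i < \<alpha> (Suc i)"
  using dsl_alpha_Suc[of i l] length_pos[of i] by simp

lemma beta_less_Suc: "\<lbrakk>1 \<le> j; j \<le> m\<rbrakk> \<Longrightarrow> \<beta> j < \<beta> (Suc j)"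
  using dsl_beta_Suc[of j m l] length_pos[of "m + j"] by simp

lemma alpha_beta_total: "\<alpha> (m + 1) + \<beta> (m + 1) = 1"
proof -
  have "\<alpha> (2 * m + 1) = 1"
    using valid by (simp add: dsl_valid_def dsl_alpha_def atLeastLessThanSuc_atLeastAtMost)
  then show ?thesis
    using dsl_alpha_add[of "m + 1" l m] by (simp add: mult_2)
qed

lemma A_index_le:
  assumes "x \<in> dsl_A m l i" "y \<in> dsl_A m l i'" "x \<le> y" "1 \<le> i" "i \<le> m" "1 \<le> i'"
  shows "i \<le> i'"
proof (rule ccontr)
  assume "\<not> i \<le> i'"
  then have "\<alpha> (Suc i') \<le> \<alpha> i"
    using assms by (intro alpha_mono) auto
  then show False
    using assms by (simp add: dsl_A_eq)
qed

lemma B_index_le: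
  assumes "x \<in> dsl_B m l j" "y \<in> dsl_B m l j'" "x \<le> y" "1 \<le> j" "j \<le> m" "1 \<le> j'"
  shows "j \<le> j'"
proof (rule ccontr)
  assume "\<not> j \<le> j'"
  then have "\<beta> (Suc j') \<le> \<beta> j"
    using assms by (intro beta_mono) auto
  then show False
    using assms by (simp add: dsl_B_eq)
qed

lemma A_below_B:
  assumes "x \<in> dsl_A m l i" "i \<in> {1..m}" "y \<in> dsl_B m l j" "j \<in> {1..m}"
  shows "x < y"
proof -
  have "x < \<alpha> (Suc i)"
    using assms(1,2) by (simp add: dsl_A_eq)
  also have "\<dots> \<le> \<alpha> (m + 1)"
    using assms(2) by (intro alpha_mono) auto
  also have "\<dots> \<le> y"
    using assms(3,4) beta_nonneg[of j] by (simp add: dsl_B_eq)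
  finally show ?thesis .
qed

lemma A_not_Bset: "\<lbrakk>i \<in> {1..m}; x \<in> dsl_A m l i\<rbrakk> \<Longrightarrow> x \<notin> dsl_Bset m l"
  unfolding dsl_Bset_def using A_below_B by blast

lemma T_A: assumes "i \<in> {1..m}" "x \<in> dsl_A m l i" shows "dsl_T m l x = x + \<beta> (Suc i)"
proof -
  have "(THE i. i \<in> {1..m} \<and> x \<in> dsl_A m l i) = i"
    using assms A_index_le by (intro the_equality) (auto intro: antisym)
  moreover have "(\<Sum>k=1..i. l (m + k)) = \<beta> (Suc i)"
    by (simp add: dsl_beta_def atLeastLessThanSuc_atLeastAtMost)
  ultimately show ?thesis
    using assms by (auto simp: dsl_T_def)
qed

lemma T_B: assumes "j \<in> {1..m}" "x \<in> dsl_B m l j" shows "dsl_T m l x = x - \<alpha> (m + 1) + \<alpha> j"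
proof -
  have "\<not> (\<exists>i\<in>{1..m}. x \<in> dsl_A m l i)"
    using assms A_not_Bset dsl_B_subset_Bset by blast
  moreover have "(THE j. j \<in> {1..m} \<and> x \<in> dsl_B m l j) = j"
    using assms B_index_le by (intro the_equality) (auto intro: antisym)
  moreover have "(\<Sum>k=j..m. l k) = \<alpha> (m + 1) - \<alpha> j"
    using assms(1) sum.atLeastLessThan_concat[of 1 j "m + 1" l]
    by (simp add: dsl_alpha_def atLeastLessThanSuc_atLeastAtMost)
  ultimately show ?thesis
    using assms by (auto simp: dsl_T_def)
qed

lemma unit_interval_cases:
  assumes "x \<in> {0..<1}"
  obtains (A) i where "i \<in> {1..m}" "x \<in> dsl_A m l i" "x \<notin> dsl_Bset m l"
    | (B) j where "j \<in> {1..m}" "x \<in> dsl_B m l j" "x \<in> dsl_Bset m l"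
proof (cases "x < \<alpha> (m + 1)")
  case True
  then obtain i where "i \<in> {1..m}" "\<alpha> i \<le> x" "x < \<alpha> (Suc i)"
    using consecutive_intervals_cover[of \<alpha> x m] assms by auto
  then show ?thesis
    using A A_not_Bset by (simp add: dsl_A_eq)
next
  case False
  then obtain j where "j \<in> {1..m}" "\<alpha> (m + 1) + \<beta> j \<le> x" "x < \<alpha> (m + 1) + \<beta> (Suc j)"
    using consecutive_intervals_cover[of "\<lambda>j. \<alpha> (m + 1) + \<beta> j" x m] assms alpha_beta_total
    by auto
  moreover from this have "x \<in> dsl_B m l j"
    by (simp add: dsl_B_eq)
  ultimately show ?thesis
    using B dsl_B_subset_Bset by blast
qed

lemma alpha_in_A: "i \<in> {1..m} \<Longrightarrow> \<alpha> i \<in> dsl_A m l i"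
  using alpha_less_Suc[of i] by (simp add: dsl_A_eq)

lemma alpha_beta_in_B: "j \<in> {1..m} \<Longrightarrow> \<alpha> (m + 1) + \<beta> j \<in> dsl_B m l j"
  using beta_less_Suc[of j] by (simp add: dsl_B_eq)

lemma A_subset_unit: "i \<in> {1..m} \<Longrightarrow> dsl_A m l i \<subseteq> {0..<1}"
  using alpha_nonneg[of i] alpha_mono[of "Suc i" "m + 1"] beta_nonneg[of "m + 1"] alpha_beta_total
  by (auto simp: dsl_A_eq)

lemma B_subset_unit: "j \<in> {1..m} \<Longrightarrow> dsl_B m l j \<subseteq> {0..<1}"
  using alpha_nonneg[of "m + 1"] beta_nonneg[of j] beta_mono[of "Suc j" "m + 1"] alpha_beta_total
  by (auto simp: dsl_B_eq)

lemma T_maps_unit: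
  assumes "x \<in> {0..<1}" shows "dsl_T m l x \<in> {0..<1}"
  using assms
proof (cases rule: unit_interval_cases)
  case (A i)
  then show ?thesis
    using T_A[OF A(1,2)] beta_nonneg[of "Suc i"] beta_mono[of "Suc i" "m + 1"]
      alpha_mono[of "Suc i" "m + 1"] alpha_beta_total assms
    by (auto simp: dsl_A_eq)
next
  case (B j)
  then show ?thesis
    using T_B[OF B(1,2)] alpha_nonneg[of j] beta_nonneg[of j] beta_mono[of "Suc j" "m + 1"]
      alpha_mono[of j "m + 1"] alpha_beta_total
    by (auto simp: dsl_B_eq)
qed

lemma T_expands:
  assumes "0 \<le> x" "x < y" "y < 1" and same: "x \<in> dsl_Bset m l \<longleftrightarrow> y \<in> dsl_Bset m l"
  shows "y - x \<le> dsl_T m l y - dsl_T m l x"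
proof -
  have x: "x \<in> {0..<1}" and y: "y \<in> {0..<1}"
    using assms by auto
  show ?thesis
    using x
  proof (cases rule: unit_interval_cases)
    case (A i)
    from y obtain i' where i': "i' \<in> {1..m}" "y \<in> dsl_A m l i'"
      by (cases rule: unit_interval_cases) (use A same in auto)
    then have "\<beta> (Suc i) \<le> \<beta> (Suc i')"
      using A A_index_le[of x i y i'] assms(2) by (intro beta_mono) auto
    then show ?thesis
      using T_A[OF A(1,2)] T_A[OF i'] by simp
  next
    case (B j)
    from y obtain j' where j': "j' \<in> {1..m}" "y \<in> dsl_B m l j'"
      by (cases rule: unit_interval_cases) (use B same in auto)
    then have "\<alpha> j \<le> \<alpha> j'"
      using B B_index_le[of x j y j'] assms(2) by (intro alpha_mono) auto
    then show ?thesis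
      using T_B[OF B(1,2)] T_B[OF j'] by simp
  qed
qed

lemma Bset_upward_closed:
  assumes "0 \<le> x" "x < y" "y < 1" "x \<in> dsl_Bset m l"
  shows "y \<in> dsl_Bset m l"
proof (rule ccontr)
  assume "y \<notin> dsl_Bset m l"
  have "y \<in> {0..<1}"
    using assms by auto
  then obtain i where "i \<in> {1..m}" "y \<in> dsl_A m l i"
    by (cases rule: unit_interval_cases) (use \<open>y \<notin> dsl_Bset m l\<close> in auto)
  moreover obtain j where "j \<in> {1..m}" "x \<in> dsl_B m l j"
    using assms(4) by (auto simp: dsl_Bset_def)
  ultimately show False
    using A_below_B assms(2) by fastforce
qed

text \<open>\<open>T\<close> translates \<open>A\<^sub>i\<close> onto \<open>[\<alpha>\<^sub>i + \<beta>\<^sub>i\<^sub>+\<^sub>1, \<alpha>\<^sub>i\<^sub>+\<^sub>1 + \<beta>\<^sub>i\<^sub>+\<^sub>1)\<close> and \<open>B\<^sub>j\<close> onto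
  \<open>[\<alpha>\<^sub>j + \<beta>\<^sub>j, \<alpha>\<^sub>j + \<beta>\<^sub>j\<^sub>+\<^sub>1)\<close>; these images interlace without overlap.\<close>
lemma T_A_ne_T_B:
  assumes "i \<in> {1..m}" "x \<in> dsl_A m l i" "j \<in> {1..m}" "y \<in> dsl_B m l j"
  shows "dsl_T m l x \<noteq> dsl_T m l y"
proof (cases "j \<le> i")
  case True
  then have "\<alpha> j \<le> \<alpha> i" "\<beta> (Suc j) \<le> \<beta> (Suc i)"
    using assms by (auto intro: alpha_mono beta_mono)
  then show ?thesis
    using assms T_A[OF assms(1,2)] T_B[OF assms(3,4)] by (auto simp: dsl_A_eq dsl_B_eq)
next
  case False
  then have "\<alpha> (Suc i) \<le> \<alpha> j" "\<beta> (Suc i) \<le> \<beta> j"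
    using assms by (auto intro: alpha_mono beta_mono)
  then show ?thesis
    using assms T_A[OF assms(1,2)] T_B[OF assms(3,4)] by (auto simp: dsl_A_eq dsl_B_eq)
qed

lemma inj_on_T: "inj_on (dsl_T m l) {0..<1}"
proof (rule inj_onI)
  fix x y assume x: "x \<in> {0..<1}" and y: "y \<in> {0..<1}" and eq: "dsl_T m l x = dsl_T m l y"
  show "x = y"
  proof (rule ccontr)
    assume "x \<noteq> y"
    show False
    proof (cases "x \<in> dsl_Bset m l \<longleftrightarrow> y \<in> dsl_Bset m l")
      case True
      then show False
        using T_expands[of x y] T_expands[of y x] x y eq \<open>x \<noteq> y\<close> by (cases "x < y") auto
    next
      case False
      have x_cases: "(\<exists>i\<in>{1..m}. x \<in> dsl_A m l i \<and> x \<notin> dsl_Bset m l) \<or>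
          (\<exists>j\<in>{1..m}. x \<in> dsl_B m l j \<and> x \<in> dsl_Bset m l)"
        using x by (cases rule: unit_interval_cases) auto
      have y_cases: "(\<exists>i\<in>{1..m}. y \<in> dsl_A m l i \<and> y \<notin> dsl_Bset m l) \<or>
          (\<exists>j\<in>{1..m}. y \<in> dsl_B m l j \<and> y \<in> dsl_Bset m l)"
        using y by (cases rule: unit_interval_cases) auto
      show False
        using x_cases y_cases False eq T_A_ne_T_B by metis
    qed
  qed
qed

lemma T_drift:
  assumes "x \<in> {0..<1}" "x \<notin> dsl_Bset m l"
  shows "x + l (m + 1) \<le> dsl_T m l x"
proof -
  obtain i where "i \<in> {1..m}" "x \<in> dsl_A m l i"
    using assms by (cases rule: unit_interval_cases) auto
  moreover have "\<beta> 2 \<le> \<beta> (Suc i)"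
    using calculation by (intro beta_mono) auto
  ultimately show ?thesis
    using T_A dsl_beta_Suc[of 1 m l] by (simp add: numeral_2_eq_2)
qed

end

sublocale deck_shuffler \<subseteq> expanding_shuffle "dsl_T m l" "dsl_Bset m l" "l (m + 1)"
proof
  show "0 < l (m + 1)"
    using length_pos m_pos by simp
qed (use T_maps_unit inj_on_T T_expands Bset_upward_closed T_drift in auto)

context deck_shuffler
begin

lemma dsl_J_eq: "dsl_J m l C = closure (convex hull (code ` C))"
  by (simp add: dsl_J_def dsl_H_eq_itinerary_code)

lemma code_T_A: "\<lbrakk>i \<in> {1..m}; x \<in> dsl_A m l i\<rbrakk> \<Longrightarrow> code (dsl_T m l x) = 2 * code x"
  using itinerary_code_unfold[of "dsl_T m l" "dsl_Bset m l" x] A_not_Bset by simp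

lemma code_T_B:
  assumes "j \<in> {1..m}" "x \<in> dsl_B m l j"
  shows "code (dsl_T m l x) = 2 * code x - 1"
proof -
  have "x \<in> dsl_Bset m l"
    using dsl_B_subset_Bset[OF assms(1)] assms(2) by blast
  then show ?thesis
    using itinerary_code_unfold[of "dsl_T m l" "dsl_Bset m l" x] by simp
qed

lemma code_mono_on_A:
  assumes "i \<in> {1..m}" "y \<in> dsl_A m l i"
  shows "code (\<alpha> i) \<le> code y"
proof (rule code_mono)
  have "\<alpha> i \<in> {0..<1}" "y \<in> {0..<1}"
    using A_subset_unit[OF assms(1)] alpha_in_A[OF assms(1)] assms(2) by blast+
  then show "0 \<le> \<alpha> i" "y < 1"
    by simp_all
  show "\<alpha> i \<le> y"
    using assms by (simp add: dsl_A_eq)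
qed

lemma code_mono_on_B:
  assumes "j \<in> {1..m}" "y \<in> dsl_B m l j"
  shows "code (\<alpha> (m + 1) + \<beta> j) \<le> code y"
proof (rule code_mono)
  have "\<alpha> (m + 1) + \<beta> j \<in> {0..<1}" "y \<in> {0..<1}"
    using B_subset_unit[OF assms(1)] alpha_beta_in_B[OF assms(1)] assms(2) by blast+
  then show "0 \<le> \<alpha> (m + 1) + \<beta> j" "y < 1"
    by simp_all
  show "\<alpha> (m + 1) + \<beta> j \<le> y"
    using assms by (simp add: dsl_B_eq)
qed

lemma T_gain_at_A:
  assumes "i \<in> {1..m}" "0 \<le> u" "u < \<alpha> i" "u \<notin> dsl_Bset m l"
  shows "\<alpha> i - u + l (m + i) \<le> dsl_T m l (\<alpha> i) - dsl_T m l u"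
proof -
  have "u \<in> {0..<1}"
    using assms alpha_in_A A_subset_unit by fastforce
  then obtain j where j: "j \<in> {1..m}" "u \<in> dsl_A m l j"
    by (cases rule: unit_interval_cases) (use assms(4) in auto)
  have "j \<le> i"
    using A_index_le[OF j(2) alpha_in_A[OF assms(1)]] assms j by auto
  moreover have "j \<noteq> i"
    using j(2) assms(1,3) by (auto simp: dsl_A_eq)
  ultimately have "j < i"
    by simp
  then have "\<beta> (Suc j) \<le> \<beta> i"
    using assms(1) by (intro beta_mono) auto
  then show ?thesis
    using T_A[OF j] T_A[OF assms(1) alpha_in_A[OF assms(1)]] dsl_beta_Suc[of i m l] assms(1) by simp
qed

lemma T_gain_at_B:
  assumes "i \<in> {2..m}" "0 \<le> u" "u < \<alpha> (m + 1) + \<beta> i" "u \<in> dsl_Bset m l"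
  shows "(\<alpha> (m + 1) + \<beta> i) - u + l (i - 1)
    \<le> dsl_T m l (\<alpha> (m + 1) + \<beta> i) - dsl_T m l u"
proof -
  have i: "i \<in> {1..m}" "i - 1 \<in> {1..m}"
    using assms(1) by auto
  obtain j where j: "j \<in> {1..m}" "u \<in> dsl_B m l j"
    using assms(4) by (auto simp: dsl_Bset_def)
  have "j \<le> i"
    using B_index_le[OF j(2) alpha_beta_in_B[OF i(1)]] assms j by auto
  moreover have "j \<noteq> i"
    using j(2) i(1) assms(3) by (auto simp: dsl_B_eq)
  ultimately have "\<alpha> j \<le> \<alpha> (i - 1)"
    using i by (intro alpha_mono) auto
  moreover have "\<alpha> i = \<alpha> (i - 1) + l (i - 1)"
    using dsl_alpha_Suc[of "i - 1" l] i by simp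
  ultimately show ?thesis
    using T_B[OF j] T_B[OF i(1) alpha_beta_in_B[OF i(1)]] by simp
qed

lemma A_singleton_separation:
  assumes i: "1 \<le> i" "i < m" and p: "dsl_H m l ` dsl_A m l i = {p}"
  shows "set_less (set_shift (dsl_J m l (dsl_B m l i)) (-1/2)) (dsl_J m l (dsl_A m l i)) \<or>
    set_less (dsl_J m l (dsl_A m l i)) (set_shift (dsl_J m l (dsl_B m l (i + 1))) (-1/2))"
proof (rule ccontr)
  assume neg: "\<not> ?thesis"
  have i_in: "i \<in> {1..m}" "i + 1 \<in> {1..m}"
    using i by auto
  have "dsl_J m l (dsl_A m l i) = {p}"
    using p by (simp add: dsl_J_def)
  then have not_left: "\<not> set_less (set_shift (closure (convex hull (code ` dsl_B m l i))) (-1/2)) {p}"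
    and not_right: "\<not> set_less {p} (set_shift (closure (convex hull (code ` dsl_B m l (i + 1)))) (-1/2))"
    using neg by (simp_all add: dsl_J_eq)
  define a b where "a = \<alpha> i" and "b = \<alpha> (m + 1) + \<beta> (i + 1)"
  have a: "a \<in> dsl_A m l i" "a \<in> {0..<1}" and b: "b \<in> dsl_B m l (i + 1)" "dsl_T m l b \<in> {0..<1}"
    using alpha_in_A[OF i_in(1)] A_subset_unit[OF i_in(1)] alpha_beta_in_B[OF i_in(2)]
      B_subset_unit[OF i_in(2)] T_maps_unit by (auto simp: a_def b_def)
  have Ta: "dsl_T m l a = \<alpha> i + \<beta> (Suc i)" and Tb: "dsl_T m l b = \<alpha> (Suc i) + \<beta> (Suc i)"
    using T_A[OF i_in(1) a(1)] T_B[OF i_in(2) b(1)] by (simp_all add: a_def b_def)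
  have code_Ta: "code (dsl_T m l a) = 2 * p"
    using code_T_A[OF i_in(1) a(1)] p a(1) by (auto simp: dsl_H_eq_itinerary_code)
  show False
  proof (rule code_collision_not_left_approximable[OF a(2)])
    show "dsl_T m l a < dsl_T m l b" "dsl_T m l b < 1" "0 < l (m + i)"
      using Ta Tb b(2) alpha_less_Suc[of i] length_pos[of "m + i"] i by auto
    have "code b - 1/2 \<le> p"
      using not_set_less_hull_shift_lower[OF not_right code_mono_on_B[OF i_in(2)]] by (simp add: b_def)
    then show "code (dsl_T m l b) \<le> code (dsl_T m l a)"
      using code_T_B[OF i_in(2) b(1)] code_Ta by simp
    show "a - u + l (m + i) \<le> dsl_T m l a - dsl_T m l u"
      if "0 \<le> u" "u < a" "u \<in> dsl_Bset m l \<longleftrightarrow> a \<in> dsl_Bset m l" for u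
      using T_gain_at_A[OF i_in(1) that(1,2)[unfolded a_def]] that(3) A_not_Bset[OF i_in(1) a(1)]
      by (simp add: a_def)
  next
    fix e :: real assume "0 < e"
    then obtain y where y: "y \<in> dsl_B m l i" "p + 1/2 - e / 2 < code y"
      using not_set_less_shift_hull_approx[OF not_left, of "e / 2"] by auto
    have "dsl_T m l y = y - \<alpha> (m + 1) + \<alpha> i" "y < \<alpha> (m + 1) + \<beta> (Suc i)"
      using T_B[OF i_in(1) y(1)] y(1) i by (auto simp: dsl_B_eq)
    moreover have "dsl_T m l y \<in> {0..<1}"
      using T_maps_unit B_subset_unit[OF i_in(1)] y(1) by blast
    moreover have "code (dsl_T m l a) - code (dsl_T m l y) < e"
      using code_T_B[OF i_in(1) y(1)] code_Ta y(2) by simp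
    ultimately show "\<exists>y. 0 \<le> y \<and> y < dsl_T m l a \<and> code (dsl_T m l a) - code y < e"
      using Ta by (intro exI[of _ "dsl_T m l y"]) auto
  qed
qed

lemma B_singleton_separation:
  assumes i: "2 \<le> i" "i \<le> m" and p: "dsl_H m l ` dsl_B m l i = {p}"
  shows "set_less (set_shift (dsl_J m l (dsl_A m l (i - 1))) (1/2)) (dsl_J m l (dsl_B m l i)) \<or>
    set_less (dsl_J m l (dsl_B m l i)) (set_shift (dsl_J m l (dsl_A m l i)) (1/2))"
proof (rule ccontr)
  assume neg: "\<not> ?thesis"
  have i_in: "i \<in> {1..m}" "i - 1 \<in> {1..m}" "i \<in> {2..m}"
    using i by auto
  have "dsl_J m l (dsl_B m l i) = {p}"
    using p by (simp add: dsl_J_def)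
  then have not_left: "\<not> set_less (set_shift (closure (convex hull (code ` dsl_A m l (i - 1)))) (1/2)) {p}"
    and not_right: "\<not> set_less {p} (set_shift (closure (convex hull (code ` dsl_A m l i))) (1/2))"
    using neg by (simp_all add: dsl_J_eq)
  define a b where "a = \<alpha> (m + 1) + \<beta> i" and "b = \<alpha> i"
  have a: "a \<in> dsl_B m l i" "a \<in> {0..<1}" and b: "b \<in> dsl_A m l i" "dsl_T m l b \<in> {0..<1}"
    using alpha_beta_in_B[OF i_in(1)] B_subset_unit[OF i_in(1)] alpha_in_A[OF i_in(1)]
      A_subset_unit[OF i_in(1)] T_maps_unit by (auto simp: a_def b_def)
  have Ta: "dsl_T m l a = \<alpha> i + \<beta> i" and Tb: "dsl_T m l b = \<alpha> i + \<beta> (Suc i)"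
    using T_B[OF i_in(1) a(1)] T_A[OF i_in(1) b(1)] by (simp_all add: a_def b_def)
  have code_Ta: "code (dsl_T m l a) = 2 * p - 1"
    using code_T_B[OF i_in(1) a(1)] p a(1) by (auto simp: dsl_H_eq_itinerary_code)
  show False
  proof (rule code_collision_not_left_approximable[OF a(2)])
    show "dsl_T m l a < dsl_T m l b" "dsl_T m l b < 1" "0 < l (i - 1)"
      using Ta Tb b(2) beta_less_Suc[of i] length_pos[of "i - 1"] i by auto
    have "code b + 1/2 \<le> p"
      using not_set_less_hull_shift_lower[OF not_right code_mono_on_A[OF i_in(1)]] by (simp add: b_def)
    then show "code (dsl_T m l b) \<le> code (dsl_T m l a)"
      using code_T_A[OF i_in(1) b(1)] code_Ta by simp
    show "a - u + l (i - 1) \<le> dsl_T m l a - dsl_T m l u"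
      if "0 \<le> u" "u < a" "u \<in> dsl_Bset m l \<longleftrightarrow> a \<in> dsl_Bset m l" for u
      using T_gain_at_B[OF i_in(3) that(1,2)[unfolded a_def]] that(3)
        dsl_B_subset_Bset[OF i_in(1)] a(1)
      by (auto simp: a_def)
  next
    fix e :: real assume "0 < e"
    then obtain y where y: "y \<in> dsl_A m l (i - 1)" "p - 1/2 - e / 2 < code y"
      using not_set_less_shift_hull_approx[OF not_left, of "e / 2"] by auto
    have "dsl_T m l y = y + \<beta> i" "y < \<alpha> i"
      using T_A[OF i_in(2) y(1)] y(1) i by (auto simp: dsl_A_eq)
    moreover have "dsl_T m l y \<in> {0..<1}"
      using T_maps_unit A_subset_unit[OF i_in(2)] y(1) by blast
    moreover have "code (dsl_T m l a) - code (dsl_T m l y) < e"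
      using code_T_A[OF i_in(2) y(1)] code_Ta y(2) by simp
    ultimately show "\<exists>y. 0 \<le> y \<and> y < dsl_T m l a \<and> code (dsl_T m l a) - code y < e"
      using Ta by (intro exI[of _ "dsl_T m l y"]) auto
  qed
qed

lemma A_last_B_first_not_singleton: "dsl_H m l ` (dsl_A m l m \<union> dsl_B m l 1) \<noteq> {p}"
proof
  assume p: "dsl_H m l ` (dsl_A m l m \<union> dsl_B m l 1) = {p}"
  have m: "m \<in> {1..m}" "1 \<in> {1..m}"
    using m_pos by auto
  have "code (\<alpha> m) = p" "code (\<alpha> (m + 1) + \<beta> 1) = p"
    using p alpha_in_A[OF m(1)] alpha_beta_in_B[OF m(2)]
    by (auto simp: dsl_H_eq_itinerary_code)
  moreover have "code (\<alpha> m) \<le> 1/2"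
    using code_T_A[OF m(1) alpha_in_A[OF m(1)]]
      itinerary_code_le_1[of "dsl_T m l" "dsl_Bset m l" "dsl_T m l (\<alpha> m)"] by simp
  moreover have "0 < code (dsl_T m l (\<alpha> (m + 1) + \<beta> 1))"
    using code_pos T_maps_unit B_subset_unit[OF m(2)] alpha_beta_in_B[OF m(2)] by blast
  ultimately show False
    using code_T_B[OF m(2) alpha_beta_in_B[OF m(2)]] by simp
qed

end

theorem proposition4:
  fixes m :: nat and l :: "nat \<Rightarrow> real"
  assumes "dsl_valid m l"
  shows
   "(\<forall>i. 1 \<le> i \<and> i \<le> m - 1 \<and> (\<exists>p. dsl_H m l ` dsl_A m l i = {p}) \<longrightarrow>
       set_less (set_shift (dsl_J m l (dsl_B m l i)) (-1/2)) (dsl_J m l (dsl_A m l i)) \<or>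
       set_less (dsl_J m l (dsl_A m l i)) (set_shift (dsl_J m l (dsl_B m l (i + 1))) (-1/2)))
    \<and> (\<forall>i. 2 \<le> i \<and> i \<le> m \<and> (\<exists>p. dsl_H m l ` dsl_B m l i = {p}) \<longrightarrow>
       set_less (set_shift (dsl_J m l (dsl_A m l (i - 1))) (1/2)) (dsl_J m l (dsl_B m l i)) \<or>
       set_less (dsl_J m l (dsl_B m l i)) (set_shift (dsl_J m l (dsl_A m l i)) (1/2)))
    \<and> ((\<exists>p. dsl_H m l ` (dsl_A m l m \<union> dsl_B m l 1) = {p}) \<longrightarrow>
       set_less (set_shift (dsl_J m l (dsl_B m l m)) (-1/2)) (dsl_J m l (dsl_A m l m \<union> dsl_B m l 1)) \<or>
       set_less (dsl_J m l (dsl_A m l m \<union> dsl_B m l 1)) (set_shift (dsl_J m l (dsl_A m l 1)) (1/2)))"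
proof -
  interpret deck_shuffler m l
    by (rule deck_shuffler.intro) (rule assms)
  show ?thesis
  proof (intro conjI allI impI, goal_cases)
    case (1 i)
    then obtain p where "1 \<le> i" "i < m" "dsl_H m l ` dsl_A m l i = {p}"
      by auto
    then show ?case
      by (rule A_singleton_separation)
  next
    case (2 i)
    then obtain p where "2 \<le> i" "i \<le> m" "dsl_H m l ` dsl_B m l i = {p}"
      by auto
    then show ?case
      by (rule B_singleton_separation)
  next
    case 3
    then show ?case
      using A_last_B_first_not_singleton by blast
  qed
qed

end
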